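(* Let $L\subset\mathbb{R}^n$ be an $n$-dimensional lattice and let $P$ be a Delaunay polytope of $L$ with vertex set $V(P)$. Let $$Y(P)=\Big\{y\in\mathbb{Z}^{V(P)}:\ \sum_{v\in V(P)}y(v)v=0,\ \sum_{v\in V(P)}y(v)=0\Big\}.$$ Consider unknowns $d(u,v)$, $u,v\in V(P)$, with $d(u,v)=d(v,u)$ and $d(v,v)=0$. Let $\mathcal{S}_{dist}(P)$ be the system of linear equations $$\sum_{v\in V(P)}y(v)\,d(u,v)=0\qquad\text{for all }y\in Y(P)\text{ and all }u\in V(P),$$ and let $\mathcal{S}_{hyp}(P)$ be the system of all equations $$\sum_{u,v\in V(P)}z(u)z(v)\,d(u,v)=0,\qquad z\in\mathbb{Z}^{V(P)},\ \sum_{v\in V(P)}z(v)=1,$$ that are satisfied by the distance $d_P(u,v)=\|u-v\|^2$. Then the systems $\mathcal{S}_{dist}(P)$ and $\mathcal{S}_{hyp}(P)$ are equivalent, i.e., they have the same solution set.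
   Context: A Delaunay polytope of a lattice $L\subset\mathbb{R}^n$ is a polytope whose vertex set is $L\cap S$, where $S=S(c,r)$ is an empty sphere: $\|a-c\|^2\ge r^2$ for all $a\in L$, and $S\cap L$ contains $n+1$ affinely independent points. *)

theory Defs
  imports "HOL-Analysis.Analysis"
begin

definition full_lattice :: "(real^'n) set \<Rightarrow> bool" where
  "full_lattice L \<longleftrightarrow> (\<exists>b :: 'n \<Rightarrow> real^'n. inj b \<and> independent (range b) \<and>
      L = {(\<Sum>i\<in>UNIV. of_int (c i) *\<^sub>R b i) | c :: 'n \<Rightarrow> int. True})"

text \<open>V is the vertex set of a Delaunay polytope of L: V = L \<inter> S for an empty sphere S = S(c,r)
  such that S \<inter> L contains n+1 affinely independent points.\<close>
definition delaunay_vertex_set :: "(real^'n) set \<Rightarrow> (real^'n) set \<Rightarrow> bool" where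
  "delaunay_vertex_set L V \<longleftrightarrow> (\<exists>(c::real^'n) (r::real).
      (\<forall>a\<in>L. (norm (a - c))\<^sup>2 \<ge> r\<^sup>2) \<and>
      V = {a\<in>L. (norm (a - c))\<^sup>2 = r\<^sup>2} \<and>
      (\<exists>T\<subseteq>V. card T = CARD('n) + 1 \<and> \<not> affine_dependent T))"

definition Y_set :: "(real^'n) set \<Rightarrow> ((real^'n) \<Rightarrow> int) set" where
  "Y_set V = {y. (\<Sum>v\<in>V. of_int (y v) *\<^sub>R v) = 0 \<and> (\<Sum>v\<in>V. y v) = 0}"

definition sat_dist :: "(real^'n) set \<Rightarrow> (real^'n \<Rightarrow> real^'n \<Rightarrow> real) \<Rightarrow> bool" where
  "sat_dist V d \<longleftrightarrow> (\<forall>y\<in>Y_set V. \<forall>u\<in>V. (\<Sum>v\<in>V. of_int (y v) * d u v) = 0)"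

definition sat_hyp :: "(real^'n) set \<Rightarrow> (real^'n \<Rightarrow> real^'n \<Rightarrow> real) \<Rightarrow> bool" where
  "sat_hyp V d \<longleftrightarrow> (\<forall>z :: real^'n \<Rightarrow> int. (\<Sum>v\<in>V. z v) = 1 \<longrightarrow>
      (\<Sum>u\<in>V. \<Sum>v\<in>V. of_int (z u * z v) * (norm (u - v))\<^sup>2) = 0 \<longrightarrow>
      (\<Sum>u\<in>V. \<Sum>v\<in>V. of_int (z u * z v) * d u v) = 0)"

end

theory Submission
  imports Defs
begin

text \<open>Both systems concern the quadratic form \<open>Q\<^sub>d(z) = \<Sum>\<^sub>u\<^sub>,\<^sub>v z(u) z(v) d(u,v)\<close> on integer
  weights with \<open>\<Sum> z = 1\<close>. For vertices on the empty sphere S(c,r) one has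
  \<open>Q(z) = 2r\<^sup>2 - 2 \<parallel>w - c\<parallel>\<^sup>2\<close> for \<open>d(u,v) = \<parallel>u - v\<parallel>\<^sup>2\<close> and the barycenter \<open>w = \<Sum> z(v) v\<close>, so the
  equations of S_hyp(P) are those z whose barycenter lies on S(c,r); being a lattice point, w is
  then itself a vertex. If d solves S_dist(P), then \<open>z - \<delta>\<^sub>w \<in> Y(P)\<close> gives
  \<open>\<Sum>\<^sub>v z(v) d(u,v) = d(u,w)\<close> and hence \<open>Q\<^sub>d(z) = d(w,w) = 0\<close>. Conversely, for \<open>y \<in> Y(P)\<close> and a
  vertex u the weights \<open>t y + \<delta>\<^sub>u\<close> have barycenter u, and
  \<open>Q\<^sub>d(t y + \<delta>\<^sub>u) = 2t \<Sum>\<^sub>v y(v) d(u,v) + t\<^sup>2 Q\<^sub>d(y)\<close> vanishes for t = 1 and t = -1.\<close>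

definition qform :: "'a set \<Rightarrow> ('a \<Rightarrow> 'a \<Rightarrow> real) \<Rightarrow> ('a \<Rightarrow> real) \<Rightarrow> real" where
  "qform V d z = (\<Sum>u\<in>V. \<Sum>v\<in>V. z u * z v * d u v)"

lemma sat_hyp_iff_qform:
  "sat_hyp V d \<longleftrightarrow> (\<forall>z :: real^'n \<Rightarrow> int. (\<Sum>v\<in>V. z v) = 1 \<longrightarrow>
      qform V (\<lambda>u v. (norm (u - v))\<^sup>2) (\<lambda>v. of_int (z v)) = 0 \<longrightarrow> qform V d (\<lambda>v. of_int (z v)) = 0)"
  by (simp add: sat_hyp_def qform_def)

lemma full_lattice_int_combination:
  fixes L :: "(real^'n) set"
  assumes "full_lattice L" and "finite F" and "F \<subseteq> L"
  shows "(\<Sum>v\<in>F. of_int (z v) *\<^sub>R v) \<in> L"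
proof -
  obtain b :: "'n \<Rightarrow> real^'n"
    where L: "L = {(\<Sum>i\<in>UNIV. of_int (c i) *\<^sub>R b i) | c :: 'n \<Rightarrow> int. True}"
    using assms(1) unfolding full_lattice_def by blast
  show ?thesis using assms(2,3)
  proof (induction F rule: finite_induct)
    case empty
    show ?case unfolding L by (intro CollectI exI[where x = "\<lambda>_. 0"]) simp
  next
    case (insert x F)
    then obtain c\<^sub>1 c\<^sub>2 where
      c\<^sub>1: "(\<Sum>v\<in>F. of_int (z v) *\<^sub>R v) = (\<Sum>i\<in>UNIV. of_int (c\<^sub>1 i) *\<^sub>R b i)" and
      c\<^sub>2: "x = (\<Sum>i\<in>UNIV. of_int (c\<^sub>2 i) *\<^sub>R b i)"
      unfolding L by auto
    have "(\<Sum>v\<in>insert x F. of_int (z v) *\<^sub>R v) = (\<Sum>i\<in>UNIV. of_int (z x * c\<^sub>2 i + c\<^sub>1 i) *\<^sub>R b i)"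
      using insert.hyps
      by (simp add: c\<^sub>1 c\<^sub>2 scaleR_sum_right sum.distrib scaleR_add_left)
    then show ?case
      unfolding L by (intro CollectI exI[where x = "\<lambda>i. z x * c\<^sub>2 i + c\<^sub>1 i"]) simp
  qed
qed

lemma qform_sphere:
  fixes V :: "'a::real_inner set" and z :: "'a \<Rightarrow> real"
  assumes "finite V" and sphere: "\<And>u. u \<in> V \<Longrightarrow> (norm (u - c))\<^sup>2 = r\<^sup>2"
    and affine: "(\<Sum>v\<in>V. z v) = 1"
  shows "qform V (\<lambda>u v. (norm (u - v))\<^sup>2) z = 2 * r\<^sup>2 - 2 * (norm ((\<Sum>v\<in>V. z v *\<^sub>R v) - c))\<^sup>2"
proof -
  have dist: "(norm (u - v))\<^sup>2 = 2 * r\<^sup>2 - 2 * ((u - c) \<bullet> (v - c))" if "u \<in> V" "v \<in> V" for u v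
  proof -
    have "(norm (u - v))\<^sup>2 = (norm ((u - c) - (v - c)))\<^sup>2" by simp
    also have "\<dots> = (norm (u - c))\<^sup>2 + (norm (v - c))\<^sup>2 - 2 * ((u - c) \<bullet> (v - c))"
      by (simp add: power2_norm_eq_inner inner_diff_left inner_diff_right inner_commute)
    finally show ?thesis using sphere that by simp
  qed
  have centred: "(\<Sum>v\<in>V. z v *\<^sub>R v) - c = (\<Sum>v\<in>V. z v *\<^sub>R (v - c))"
    by (simp add: scaleR_diff_right sum_subtractf scaleR_sum_left[symmetric] affine)
  have "qform V (\<lambda>u v. (norm (u - v))\<^sup>2) z
      = (\<Sum>u\<in>V. \<Sum>v\<in>V. z u * z v * (2 * r\<^sup>2)) - 2 * (\<Sum>u\<in>V. \<Sum>v\<in>V. z u * z v * ((u - c) \<bullet> (v - c)))"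
    unfolding qform_def
    by (simp add: dist right_diff_distrib sum_subtractf sum_distrib_left mult_ac cong: sum.cong)
  also have "(\<Sum>u\<in>V. \<Sum>v\<in>V. z u * z v * (2 * r\<^sup>2)) = (\<Sum>u\<in>V. z u) * (\<Sum>v\<in>V. z v) * (2 * r\<^sup>2)"
    by (simp add: sum_distrib_left sum_distrib_right mult_ac)
  also have "\<dots> = 2 * r\<^sup>2"
    by (simp add: affine)
  also have "(\<Sum>u\<in>V. \<Sum>v\<in>V. z u * z v * ((u - c) \<bullet> (v - c))) = (norm ((\<Sum>v\<in>V. z v *\<^sub>R v) - c))\<^sup>2"
    unfolding centred power2_norm_eq_inner inner_sum_left inner_sum_right
    by (subst sum.swap) (simp add: sum_distrib_left mult_ac)
  finally show ?thesis .
qed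

lemma qform_eq_diag_of_rows:
  assumes "w \<in> V" and sym: "\<And>u v. u \<in> V \<Longrightarrow> v \<in> V \<Longrightarrow> d u v = d v u"
    and rows: "\<And>u. u \<in> V \<Longrightarrow> (\<Sum>v\<in>V. z v * d u v) = d u w"
  shows "qform V d z = d w w"
proof -
  have "qform V d z = (\<Sum>u\<in>V. z u * (\<Sum>v\<in>V. z v * d u v))"
    by (simp add: qform_def sum_distrib_left mult.assoc)
  also have "\<dots> = (\<Sum>u\<in>V. z u * d w u)"
    by (intro sum.cong refl) (simp add: rows sym \<open>w \<in> V\<close>)
  also have "\<dots> = d w w"
    using rows[OF \<open>w \<in> V\<close>] by simp
  finally show ?thesis .
qed

lemma qform_add_vertex:
  assumes "finite V" and "u \<in> V" and sym: "\<And>a b. a \<in> V \<Longrightarrow> b \<in> V \<Longrightarrow> d a b = d b a"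
  shows "qform V d (\<lambda>v. t * y v + (if v = u then 1 else 0))
    = d u u + 2 * t * (\<Sum>v\<in>V. y v * d u v) + t\<^sup>2 * qform V d y"
proof -
  define \<delta> :: "'a \<Rightarrow> real" where "\<delta> v = (if v = u then 1 else 0)" for v
  have pick: "(\<Sum>v\<in>V. \<delta> v * f v) = f u" for f :: "'a \<Rightarrow> real"
  proof -
    have "\<delta> v * f v = (if v = u then f v else 0)" for v by (simp add: \<delta>_def)
    then show ?thesis using assms(1,2) by (simp add: sum.delta')
  qed
  have "qform V d (\<lambda>v. t * y v + \<delta> v)
    = (\<Sum>a\<in>V. \<Sum>b\<in>V. t\<^sup>2 * (y a * y b * d a b) + t * (y a * (\<delta> b * d a b))
         + t * (\<delta> a * (y b * d a b)) + \<delta> a * (\<delta> b * d a b))"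
    unfolding qform_def by (intro sum.cong refl) (simp add: algebra_simps power2_eq_square)
  also have "\<dots> = t\<^sup>2 * qform V d y + t * (\<Sum>a\<in>V. y a * d a u) + t * (\<Sum>b\<in>V. y b * d u b) + d u u"
    by (simp add: qform_def sum.distrib sum_distrib_left[symmetric] pick)
  finally have "qform V d (\<lambda>v. t * y v + (if v = u then 1 else 0))
    = t\<^sup>2 * qform V d y + t * (\<Sum>a\<in>V. y a * d a u) + t * (\<Sum>b\<in>V. y b * d u b) + d u u"
    by (simp add: \<delta>_def)
  also have "(\<Sum>a\<in>V. y a * d a u) = (\<Sum>b\<in>V. y b * d u b)"
    by (intro sum.cong refl) (simp add: sym \<open>u \<in> V\<close>)
  finally show ?thesis by simp
qed

lemma Y_set_scale:
  assumes "y \<in> Y_set V"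
  shows "(\<lambda>v. t * y v) \<in> Y_set V"
proof -
  have "(\<Sum>v\<in>V. of_int (t * y v) *\<^sub>R v) = of_int t *\<^sub>R (\<Sum>v\<in>V. of_int (y v) *\<^sub>R v)"
    by (simp add: scaleR_sum_right)
  then show ?thesis
    using assms by (simp add: Y_set_def sum_distrib_left[symmetric])
qed

lemma Y_set_minus_vertex_iff:
  fixes V :: "(real^'n) set"
  assumes "finite V" and "w \<in> V"
  shows "(\<lambda>v. z v - (if v = w then 1 else 0)) \<in> Y_set V
    \<longleftrightarrow> (\<Sum>v\<in>V. z v) = 1 \<and> (\<Sum>v\<in>V. of_int (z v) *\<^sub>R v) = w"
proof -
  have sum_eq: "(\<Sum>v\<in>V. z v - (if v = w then 1 else 0)) = (\<Sum>v\<in>V. z v) - 1"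
    using assms by (simp add: sum_subtractf sum.delta')
  have comb_eq: "(\<Sum>v\<in>V. of_int (z v - (if v = w then 1 else 0)) *\<^sub>R v) = (\<Sum>v\<in>V. of_int (z v) *\<^sub>R v) - w"
  proof -
    have "(\<Sum>v\<in>V. of_int (z v - (if v = w then 1 else 0)) *\<^sub>R v)
        = (\<Sum>v\<in>V. of_int (z v) *\<^sub>R v - (if v = w then v else 0))"
      by (intro sum.cong refl) (simp add: scaleR_diff_left)
    then show ?thesis
      using assms by (simp add: sum_subtractf sum.delta')
  qed
  show ?thesis
    unfolding Y_set_def mem_Collect_eq sum_eq comb_eq by (auto simp only: right_minus_eq)
qed

lemma sat_dist_imp_sat_hyp:
  fixes L V :: "(real^'n) set"
  assumes "full_lattice L" and V: "V = {a\<in>L. (norm (a - c))\<^sup>2 = r\<^sup>2}" and "finite V"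
    and sym: "\<And>u v. u \<in> V \<Longrightarrow> v \<in> V \<Longrightarrow> d u v = d v u"
    and diag: "\<And>v. v \<in> V \<Longrightarrow> d v v = 0"
    and "sat_dist V d"
  shows "sat_hyp V d"
  unfolding sat_hyp_iff_qform
proof (intro allI impI)
  fix z :: "real^'n \<Rightarrow> int"
  assume affine: "(\<Sum>v\<in>V. z v) = 1"
    and "qform V (\<lambda>u v. (norm (u - v))\<^sup>2) (\<lambda>v. of_int (z v)) = 0"
  define w where "w = (\<Sum>v\<in>V. of_int (z v) *\<^sub>R v)"
  have sphere: "\<And>u. u \<in> V \<Longrightarrow> (norm (u - c))\<^sup>2 = r\<^sup>2" and "V \<subseteq> L"
    using V by auto
  have "(\<Sum>v\<in>V. of_int (z v)) = (1::real)"
    using affine by (simp flip: of_int_sum)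
  then have "(norm (w - c))\<^sup>2 = r\<^sup>2"
    using qform_sphere[of V c r "\<lambda>v. of_int (z v)"] \<open>finite V\<close> sphere
      \<open>qform V (\<lambda>u v. (norm (u - v))\<^sup>2) (\<lambda>v. of_int (z v)) = 0\<close>
    by (simp add: w_def)
  moreover have "w \<in> L"
    unfolding w_def using assms(1) \<open>finite V\<close> \<open>V \<subseteq> L\<close> by (rule full_lattice_int_combination)
  ultimately have "w \<in> V"
    by (simp add: V)
  have Y: "(\<lambda>v. z v - (if v = w then 1 else 0)) \<in> Y_set V"
    using Y_set_minus_vertex_iff[OF \<open>finite V\<close> \<open>w \<in> V\<close>] affine w_def by simp
  have Y_rows: "\<forall>u\<in>V. (\<Sum>v\<in>V. of_int (z v - (if v = w then 1 else 0)) * d u v) = 0"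
    using \<open>sat_dist V d\<close> Y unfolding sat_dist_def by (rule bspec)
  have rows: "(\<Sum>v\<in>V. of_int (z v) * d u v) = d u w" if "u \<in> V" for u
  proof -
    have "(\<Sum>v\<in>V. of_int (z v - (if v = w then 1 else 0)) * d u v) = 0"
      using Y_rows that by blast
    moreover have "(\<Sum>v\<in>V. of_int (z v - (if v = w then 1 else 0)) * d u v)
        = (\<Sum>v\<in>V. of_int (z v) * d u v - (if v = w then d u v else 0))"
      by (intro sum.cong refl) (simp add: left_diff_distrib)
    ultimately show ?thesis
      using \<open>finite V\<close> \<open>w \<in> V\<close> by (simp add: sum_subtractf sum.delta')
  qed
  show "qform V d (\<lambda>v. of_int (z v)) = 0"
    using qform_eq_diag_of_rows[OF \<open>w \<in> V\<close> sym rows] diag[OF \<open>w \<in> V\<close>] by simp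
qed

lemma sat_hyp_imp_sat_dist:
  fixes V :: "(real^'n) set"
  assumes "finite V" and sphere: "\<And>u. u \<in> V \<Longrightarrow> (norm (u - c))\<^sup>2 = r\<^sup>2"
    and sym: "\<And>u v. u \<in> V \<Longrightarrow> v \<in> V \<Longrightarrow> d u v = d v u"
    and diag: "\<And>v. v \<in> V \<Longrightarrow> d v v = 0"
    and "sat_hyp V d"
  shows "sat_dist V d"
  unfolding sat_dist_def
proof (intro ballI)
  fix y u
  assume "y \<in> Y_set V" and "u \<in> V"
  define A where "A = (\<Sum>v\<in>V. of_int (y v) * d u v)"
  have "2 * of_int t * A + (of_int t)\<^sup>2 * qform V d (\<lambda>v. of_int (y v)) = 0" for t :: int
  proof -
    define z where "z v = t * y v + (if v = u then 1 else 0)" for v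
    have "(\<lambda>v. z v - (if v = u then 1 else 0)) \<in> Y_set V"
      using Y_set_scale[OF \<open>y \<in> Y_set V\<close>] by (simp add: z_def)
    then have affine: "(\<Sum>v\<in>V. z v) = 1" and bary: "(\<Sum>v\<in>V. of_int (z v) *\<^sub>R v) = u"
      using Y_set_minus_vertex_iff[OF \<open>finite V\<close> \<open>u \<in> V\<close>] by auto
    have "(\<Sum>v\<in>V. of_int (z v)) = (1::real)"
      using affine by (simp flip: of_int_sum)
    then have "qform V (\<lambda>u v. (norm (u - v))\<^sup>2) (\<lambda>v. of_int (z v)) = 0"
      using qform_sphere[of V c r "\<lambda>v. of_int (z v)"] \<open>finite V\<close> sphere \<open>u \<in> V\<close> bary by simp
    then have "qform V d (\<lambda>v. of_int (z v)) = 0"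
      using \<open>sat_hyp V d\<close> affine unfolding sat_hyp_iff_qform by blast
    moreover have "(\<lambda>v. of_int (z v)) = (\<lambda>v. of_int t * of_int (y v) + (if v = u then 1 else (0::real)))"
      by (auto simp: z_def)
    ultimately have "qform V d (\<lambda>v. of_int t * of_int (y v) + (if v = u then 1 else 0)) = 0"
      by simp
    then show ?thesis
      using qform_add_vertex[of V u d "of_int t" "\<lambda>v. of_int (y v)", OF \<open>finite V\<close> \<open>u \<in> V\<close> sym]
        diag[OF \<open>u \<in> V\<close>]
      by (simp add: A_def)
  qed
  from this[of 1] this[of "-1"] show "A = 0" by simp
qed

theorem lemma2:
  fixes L V :: "(real^'n) set"
  assumes "full_lattice L"
    and "delaunay_vertex_set L V"
  shows "\<forall>d :: real^'n \<Rightarrow> real^'n \<Rightarrow> real.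
           (\<forall>u\<in>V. \<forall>v\<in>V. d u v = d v u) \<and> (\<forall>v\<in>V. d v v = 0) \<longrightarrow>
           (sat_dist V d \<longleftrightarrow> sat_hyp V d)"
proof (intro allI impI)
  fix d :: "real^'n \<Rightarrow> real^'n \<Rightarrow> real"
  assume "(\<forall>u\<in>V. \<forall>v\<in>V. d u v = d v u) \<and> (\<forall>v\<in>V. d v v = 0)"
  then have sym: "\<And>u v. u \<in> V \<Longrightarrow> v \<in> V \<Longrightarrow> d u v = d v u"
    and diag: "\<And>v. v \<in> V \<Longrightarrow> d v v = 0" by auto
  show "sat_dist V d \<longleftrightarrow> sat_hyp V d"
  proof (cases "finite V")
    case False
    \<comment> \<open>all sums over V are 0, so S_dist holds trivially and S_hyp is vacuous\<close>
    then show ?thesis by (simp add: sat_dist_def sat_hyp_def)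
  next
    case True
    obtain c r where V: "V = {a\<in>L. (norm (a - c))\<^sup>2 = r\<^sup>2}"
      using assms(2) unfolding delaunay_vertex_set_def by blast
    show ?thesis
      using sat_dist_imp_sat_hyp[where d = d, OF assms(1) V True sym diag]
        sat_hyp_imp_sat_dist[where d = d and c = c and r = r, OF True _ sym diag] V by blast
  qed
qed

end
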